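(* Let $m>1$ and let $\gamma$ be a permutation of $(\mathbb{F}_2)^m$ with $0\gamma=0$. Then $\mathcal{N}(\gamma)\neq0$ if and only if $\gamma$ is strongly $1$-anti-invariant.
   Context: For Boolean functions $f,g:(\mathbb{F}_2)^m\to\mathbb{F}_2$, $\mathrm{d}(f,g)=|\{x: f(x)\ne g(x)\}|$; $\mathcal{A}_m$ is the set of affine Boolean functions (algebraic degree at most $1$); the non-linearity of $f$ is $\mathcal{N}(f)=\min\{\mathrm{d}(f,\alpha):\alpha\in\mathcal{A}_m\}$. For a vectorial function $F:(\mathbb{F}_2)^m\to(\mathbb{F}_2)^m$ with coordinate functions $F_1,\dots,F_m$ and $v\ne0$, the component is ${}_vF=\sum_i v_iF_i$, and $\mathcal{N}(F)=\min\{\mathcal{N}({}_vF): v\in(\mathbb{F}_2)^m\setminus\{0\}\}$. $F$ is strongly $1$-anti-invariant if for any two subspaces $U,W$ of $(\mathbb{F}_2)^m$ with $F(U)=W$, either $\dim U=\dim W<m-1$ or $U=W=(\mathbb{F}_2)^m$. *)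

theory Defs
  imports "HOL-Analysis.Analysis" "HOL-Library.Z2"
begin

text \<open>The field F_2 is the library type bit (HOL-Library.Z2); (F_2)^m is bit^'n with
  m = CARD('n).\<close>

lemma UNIV_bit: "(UNIV :: bit set) = {0, 1}"
  by (metis (full_types) UNIV_eq_I bit_not_zero_iff insertCI)

instance bit :: finite
  by standard (simp add: UNIV_bit)

type_synonym 'n boolfun = "bit ^ 'n \<Rightarrow> bit"
type_synonym 'n vecfun = "bit ^ 'n \<Rightarrow> bit ^ 'n"

definition hdist :: "'n::finite boolfun \<Rightarrow> 'n boolfun \<Rightarrow> nat" where
  "hdist f g = card {x. f x \<noteq> g x}"

definition affine_funs :: "'n::finite boolfun set" where
  "affine_funs = {(\<lambda>x. c + (\<Sum>i\<in>UNIV. a $ i * x $ i)) | c a. True}"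

definition nonlin :: "'n::finite boolfun \<Rightarrow> nat" where
  "nonlin f = Min ((\<lambda>\<alpha>. hdist f \<alpha>) ` affine_funs)"

definition component :: "bit ^ 'n \<Rightarrow> 'n::finite vecfun \<Rightarrow> 'n boolfun" where
  "component v F = (\<lambda>x. \<Sum>i\<in>UNIV. v $ i * F x $ i)"

definition vnonlin :: "'n::finite vecfun \<Rightarrow> nat" where
  "vnonlin F = Min ((\<lambda>v. nonlin (component v F)) ` (UNIV - {0}))"

definition strongly_1_anti_invariant :: "'n::finite vecfun \<Rightarrow> bool" where
  "strongly_1_anti_invariant F \<longleftrightarrow>
     (\<forall>U W. vec.subspace U \<and> vec.subspace W \<and> F ` U = W \<longrightarrow>
        (vec.dim U = vec.dim W \<and> vec.dim W < CARD('n) - 1) \<or> (U = UNIV \<and> W = UNIV))"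

end

theory Submission
  imports Defs
begin

text \<open>A component \<open>v\<cdot>\<gamma>\<close> has non-linearity 0 exactly when it is affine, and since
  \<open>\<gamma> 0 = 0\<close> this means \<open>v\<cdot>\<gamma>(x) = a\<cdot>x\<close>; for a bijection this says precisely that
  \<open>\<gamma>\<close> maps the hyperplane \<open>a\<^sup>\<bottom>\<close> onto the hyperplane \<open>v\<^sup>\<bottom>\<close>. On the other hand, a pair
  \<open>\<gamma>(U) = W\<close> of subspaces violating strong 1-anti-invariance consists of equinumerous, hence
  equidimensional, proper subspaces of dimension at least \<open>m - 1\<close>, i.e. of two hyperplanes; and
  over \<open>\<bbbF>\<^sub>2\<close> every hyperplane is the kernel of a non-zero linear form.\<close>

definition dotp :: "'a::comm_semiring_0 ^ 'n::finite \<Rightarrow> 'a ^ 'n \<Rightarrow> 'a" where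
  "dotp a x = (\<Sum>i\<in>UNIV. a $ i * x $ i)"

lemma dotp_add: "dotp a (x + y) = dotp a x + dotp a y"
  by (simp add: dotp_def distrib_left sum.distrib)

lemma dotp_diff: "dotp (a :: 'a::comm_ring ^ 'n::finite) (x - y) = dotp a x - dotp a y"
  by (simp add: dotp_def right_diff_distrib sum_subtractf)

lemma dotp_scale: "dotp a (c *s x) = c * dotp a x"
  by (simp add: dotp_def sum_distrib_left mult.left_commute)

lemma dotp_axis: "dotp (a :: 'a::comm_semiring_1 ^ 'n::finite) (axis i 1) = a $ i"
  by (simp add: dotp_def axis_def if_distrib cong: if_cong)

lemma dotp_zero_left [simp]: "dotp 0 x = 0"
  by (simp add: dotp_def)

lemma dotp_zero_right [simp]: "dotp a 0 = 0"
  by (simp add: dotp_def)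

lemma dotp_not_identically_zero:
  fixes a :: "'a::comm_semiring_1 ^ 'n::finite"
  assumes "a \<noteq> 0"
  obtains x where "dotp a x \<noteq> 0"
  using assms dotp_axis by (metis vec_eq_iff zero_index)

lemma subspace_kernel_dotp: "vec.subspace {x. dotp a x = 0}"
  by (simp add: vec.subspace_def dotp_add dotp_scale)

lemma dim_kernel_dotp:
  fixes a :: "'a::field ^ 'n::finite"
  assumes "a \<noteq> 0"
  shows "vec.dim {x. dotp a x = 0} = CARD('n) - 1"
proof -
  let ?K = "{x. dotp a x = 0}"
  obtain i where ai: "a $ i \<noteq> 0"
    using assms by (auto simp: vec_eq_iff)
  let ?b = "axis i (1::'a)"
  have span_K: "vec.span ?K = ?K"
    by (simp add: subspace_kernel_dotp)
  have "x - (dotp a x / a $ i) *s ?b \<in> ?K" for x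
    using ai by (simp add: dotp_diff dotp_scale dotp_axis)
  then have "vec.span (insert ?b ?K) = UNIV"
    unfolding vec.span_insert span_K by blast
  then have "vec.dim (insert ?b ?K) = CARD('n)"
    by (metis vec.dim_span vec.dim_UNIV card_cart_basis)
  moreover have "?b \<notin> vec.span ?K"
    using ai by (simp add: span_K dotp_axis)
  ultimately show ?thesis
    by (simp add: vec.dim_insert)
qed

lemma card_span_independent:
  fixes B :: "('a::{field,finite} ^ 'n::finite) set"
  assumes indep: "vec.independent B"
  shows "card (vec.span B) = CARD('a) ^ card B"
proof -
  let ?comb = "\<lambda>u. \<Sum>v\<in>B. u v *s v"
  have fin: "finite B" by simp
  have "vec.span B = ?comb ` (B \<rightarrow>\<^sub>E UNIV)"
  proof -
    have "?comb u = ?comb (restrict u B)" for u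
      by (rule sum.cong) auto
    then show ?thesis
      unfolding vec.span_finite[OF fin] by (force intro: image_eqI[of _ _ "restrict _ B"])
  qed
  moreover have "inj_on ?comb (B \<rightarrow>\<^sub>E UNIV)"
  proof (rule inj_onI)
    fix u w assume u: "u \<in> B \<rightarrow>\<^sub>E UNIV" and w: "w \<in> B \<rightarrow>\<^sub>E UNIV" and eq: "?comb u = ?comb w"
    have "(\<Sum>v\<in>B. (u v - w v) *s v) = 0"
      using eq by (simp add: vector_sub_rdistrib sum_subtractf)
    then have "\<forall>v\<in>B. u v - w v = 0"
      using vec.independent_explicit[THEN iffD1, OF indep, THEN conjunct2, rule_format,
          of "\<lambda>v. u v - w v"] by blast
    then show "u = w"
      using u w by (auto intro: PiE_ext)
  qed
  ultimately show ?thesis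
    by (simp add: card_image card_PiE fin)
qed

lemma card_subspace:
  fixes U :: "('a::{field,finite} ^ 'n::finite) set"
  assumes "vec.subspace U"
  shows "card U = CARD('a) ^ vec.dim U"
proof -
  obtain B where "B \<subseteq> U" "vec.independent B" "U \<subseteq> vec.span B" "card B = vec.dim U"
    by (rule vec.basis_exists)
  moreover have "vec.span B = U"
    using calculation assms vec.span_minimal by blast
  ultimately show ?thesis
    using card_span_independent by metis
qed

lemma subspace_eq_UNIV_iff_dim:
  fixes U :: "('a::field ^ 'n::finite) set"
  assumes "vec.subspace U"
  shows "U = UNIV \<longleftrightarrow> vec.dim U = CARD('n)"
  using vec.dim_eq_full[of U] vec.span_eq_iff[THEN iffD2, OF assms]
  by (simp add: card_cart_basis vec.dimension_def)

definition hyperplane :: "('a::field ^ 'n::finite) set \<Rightarrow> bool" where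
  "hyperplane U \<longleftrightarrow> vec.subspace U \<and> vec.dim U = CARD('n) - 1"

lemma hyperplane_neq_UNIV:
  fixes U :: "('a::field ^ 'n::finite) set"
  assumes "hyperplane U"
  shows "U \<noteq> UNIV"
proof -
  have "vec.dim U = CARD('n) - 1"
    using assms by (simp add: hyperplane_def)
  then have "vec.dim U \<noteq> CARD('n)"
    using zero_less_card_finite[where 'a='n] by linarith
  then show ?thesis
    using assms by (simp add: hyperplane_def subspace_eq_UNIV_iff_dim)
qed

lemma hyperplane_kernel_dotp: "a \<noteq> 0 \<Longrightarrow> hyperplane {x. dotp a x = 0}"
  by (simp add: hyperplane_def subspace_kernel_dotp dim_kernel_dotp)

lemma dim_eq_if_card_eq:
  fixes U W :: "('a::{field,finite} ^ 'n::finite) set"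
  assumes "vec.subspace U" "vec.subspace W" "card U = card W"
  shows "vec.dim U = vec.dim W"
proof -
  have "card {0, 1::'a} \<le> CARD('a)"
    by (rule card_mono) auto
  then have "1 < CARD('a)"
    by simp
  then show ?thesis
    using assms by (simp add: card_subspace)
qed

lemma bit_eqI: "((x::bit) = 0 \<longleftrightarrow> y = 0) \<Longrightarrow> x = y"
  by (cases "x = 0"; cases "y = 0") auto

lemma bitvec_add_self [simp]: "(x::bit ^ 'n) + x = 0"
  by (simp add: vec_eq_iff)

lemma additive_bit_functional_eq_dotp:
  fixes f :: "bit ^ 'n::finite \<Rightarrow> bit"
  assumes add: "\<And>x y. f (x + y) = f x + f y"
  shows "f x = dotp (\<chi> i. f (axis i 1)) x"
proof -
  have f0: "f 0 = 0"
    using add[of 0 0] by simp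
  have scale: "f (c *s y) = c * f y" for c y
    using f0 by (cases "c = 0") auto
  have sum: "f (\<Sum>i\<in>I. g i) = (\<Sum>i\<in>I. f (g i))" for I and g :: "'n \<Rightarrow> bit ^ 'n"
    by (induction I rule: infinite_finite_induct) (simp_all add: f0 add)
  have "f x = f (\<Sum>i\<in>UNIV. x $ i *s axis i 1)"
    by (simp only: basis_expansion)
  also have "\<dots> = dotp (\<chi> i. f (axis i 1)) x"
    by (simp only: sum scale dotp_def vec_lambda_beta mult.commute)
  finally show ?thesis .
qed

lemma hyperplane_mem_or_add_mem:
  fixes U :: "(bit ^ 'n::finite) set"
  assumes "hyperplane U" and "b \<notin> U"
  shows "x \<in> U \<or> x + b \<in> U"
proof -
  have U: "vec.subspace U" and dim_U: "vec.dim U = CARD('n) - 1"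
    using assms(1) by (simp_all add: hyperplane_def)
  have span_U: "vec.span U = U"
    using U by simp
  have "vec.dim (insert b U) = CARD('n)"
    using assms(2) dim_U hyperplane_neq_UNIV[OF assms(1)] subspace_eq_UNIV_iff_dim[OF U]
    by (simp add: vec.dim_insert span_U)
  then have "vec.span (insert b U) = UNIV"
    by (metis subspace_eq_UNIV_iff_dim vec.dim_span vec.subspace_span)
  then obtain k where k: "x - k *s b \<in> U"
    unfolding vec.span_insert span_U by blast
  have "x - b = x + b"
    by (simp add: diff_eq_eq add.assoc)
  then show ?thesis
    using k bit_not_zero_iff[of k] by (cases "k = 0") (simp_all only: vector_smult_lzero
        vector_smult_lid diff_zero simp_thms)
qed

lemma hyperplane_indicator_add:
  fixes U :: "(bit ^ 'n::finite) set"
  assumes "hyperplane U"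
  shows "of_bool (x + y \<notin> U) = of_bool (x \<notin> U) + (of_bool (y \<notin> U) :: bit)"
proof -
  have span_U: "vec.span U = U"
    using assms by (simp add: hyperplane_def)
  consider "x \<in> U" | "y \<in> U" | "x \<notin> U" "y \<notin> U"
    by blast
  then show ?thesis
  proof cases
    case 1
    then have "x + y \<in> U \<longleftrightarrow> y \<in> U"
      using vec.span_add_eq[of x U y] unfolding span_U by blast
    with 1 show ?thesis
      by simp
  next
    case 2
    then have "x + y \<in> U \<longleftrightarrow> x \<in> U"
      using vec.span_add_eq2[of y U x] unfolding span_U by blast
    with 2 show ?thesis
      by simp
  next
    case 3
    \<comment> \<open>\<open>U\<close> has index 2, so two vectors outside \<open>U\<close> lie in the same coset.\<close>
    then have "y + x \<in> U"
      using hyperplane_mem_or_add_mem[OF assms, of x y] by blast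
    with 3 show ?thesis
      by (simp add: add.commute)
  qed
qed

lemma hyperplane_eq_kernel_dotp:
  fixes U :: "(bit ^ 'n::finite) set"
  assumes "hyperplane U"
  obtains a where "a \<noteq> 0" "U = {x. dotp a x = 0}"
proof -
  define a :: "bit ^ 'n" where "a = (\<chi> i. of_bool (axis i 1 \<notin> U))"
  have indicator_dotp: "of_bool (x \<notin> U) = dotp a x" for x
    unfolding a_def
    by (rule additive_bit_functional_eq_dotp) (rule hyperplane_indicator_add[OF assms])
  obtain b where "b \<notin> U"
    using hyperplane_neq_UNIV[OF assms] by blast
  then have "a \<noteq> 0"
    using indicator_dotp[of b] by auto
  moreover have "U = {x. dotp a x = 0}"
    by (auto simp flip: indicator_dotp)
  ultimately show ?thesis
    by (rule that)
qed

lemma Min_image_eq_0_iff: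
  fixes g :: "'a \<Rightarrow> nat"
  assumes "finite S" "S \<noteq> {}"
  shows "Min (g ` S) = 0 \<longleftrightarrow> (\<exists>x\<in>S. g x = 0)"
  using assms by (auto simp add: Min_eq_iff)

lemma nonlin_eq_0_iff:
  fixes f :: "'n::finite boolfun"
  shows "nonlin f = 0 \<longleftrightarrow> (\<exists>c a. \<forall>x. f x = c + dotp a x)"
proof -
  have "finite (affine_funs :: 'n boolfun set)" "affine_funs \<noteq> {}"
    unfolding affine_funs_def by auto
  then have "nonlin f = 0 \<longleftrightarrow> (\<exists>g\<in>affine_funs. hdist f g = 0)"
    unfolding nonlin_def by (rule Min_image_eq_0_iff)
  also have "\<dots> \<longleftrightarrow> f \<in> affine_funs"
  proof -
    have "hdist f g = 0 \<longleftrightarrow> f = g" for g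
      by (auto simp: hdist_def fun_eq_iff)
    then show ?thesis
      by simp
  qed
  also have "\<dots> \<longleftrightarrow> (\<exists>c a. \<forall>x. f x = c + dotp a x)"
    unfolding affine_funs_def dotp_def[symmetric] by (simp only: mem_Collect_eq simp_thms fun_eq_iff)
  finally show ?thesis .
qed

lemma nonlin_eq_0_iff_linear:
  fixes f :: "'n::finite boolfun"
  assumes "f 0 = 0"
  shows "nonlin f = 0 \<longleftrightarrow> (\<exists>a. \<forall>x. f x = dotp a x)"
proof
  assume "nonlin f = 0"
  then obtain c a where affine: "\<forall>x. f x = c + dotp a x"
    by (auto simp: nonlin_eq_0_iff)
  moreover have "c = 0"
    using affine[rule_format, of 0] assms by simp
  ultimately show "\<exists>a. \<forall>x. f x = dotp a x"
    by auto
next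
  assume "\<exists>a. \<forall>x. f x = dotp a x"
  then show "nonlin f = 0"
    unfolding nonlin_eq_0_iff by (metis add_0)
qed

lemma vnonlin_eq_0_iff:
  fixes F :: "'n::finite vecfun"
  assumes "F 0 = 0"
  shows "vnonlin F = 0 \<longleftrightarrow> (\<exists>v a. v \<noteq> 0 \<and> (\<forall>x. dotp v (F x) = dotp a x))"
proof -
  have "(1 :: bit ^ 'n) \<noteq> 0"
    by (simp add: vec_eq_iff)
  then have nonempty: "UNIV - {0 :: bit ^ 'n} \<noteq> {}"
    by blast
  have "vnonlin F = 0 \<longleftrightarrow> (\<exists>v\<in>UNIV - {0}. nonlin (component v F) = 0)"
    unfolding vnonlin_def using nonempty by (simp add: Min_image_eq_0_iff)
  also have "\<dots> \<longleftrightarrow> (\<exists>v. v \<noteq> 0 \<and> nonlin (\<lambda>x. dotp v (F x)) = 0)"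
    unfolding component_def dotp_def by blast
  also have "\<dots> \<longleftrightarrow> (\<exists>v a. v \<noteq> 0 \<and> (\<forall>x. dotp v (F x) = dotp a x))"
    using assms by (simp add: nonlin_eq_0_iff_linear)
  finally show ?thesis .
qed

lemma not_strongly_1_anti_invariant_iff:
  fixes F :: "'n::finite vecfun"
  assumes "inj F"
  shows "\<not> strongly_1_anti_invariant F \<longleftrightarrow> (\<exists>U W. hyperplane U \<and> hyperplane W \<and> F ` U = W)"
proof
  assume "\<not> strongly_1_anti_invariant F"
  then obtain U W where U: "vec.subspace U" and W: "vec.subspace W" and image: "F ` U = W"
    and not_small: "\<not> (vec.dim U = vec.dim W \<and> vec.dim W < CARD('n) - 1)"
    and not_full: "\<not> (U = UNIV \<and> W = UNIV)"
    unfolding strongly_1_anti_invariant_def by blast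
  have card_eq: "card U = card W"
    using image assms by (metis card_image inj_on_subset subset_UNIV)
  then have dim_eq: "vec.dim U = vec.dim W"
    by (rule dim_eq_if_card_eq[OF U W])
  have "W \<noteq> UNIV"
  proof
    assume "W = UNIV"
    then have "U = UNIV"
      using card_eq by (metis card_subset_eq finite subset_UNIV)
    with \<open>W = UNIV\<close> not_full show False
      by blast
  qed
  then have "vec.dim W < CARD('n)"
    using W vec.dim_subset_UNIV[of W]
    by (simp add: subspace_eq_UNIV_iff_dim vec.dimension_def card_cart_basis)
  then have "hyperplane U" "hyperplane W"
    using U W not_small dim_eq by (simp_all add: hyperplane_def)
  with image show "\<exists>U W. hyperplane U \<and> hyperplane W \<and> F ` U = W"
    by blast
next
  assume "\<exists>U W. hyperplane U \<and> hyperplane W \<and> F ` U = W"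
  then obtain U W where "hyperplane U" "hyperplane W" "F ` U = W"
    by blast
  moreover from this have "U \<noteq> UNIV"
    by (simp add: hyperplane_neq_UNIV)
  ultimately show "\<not> strongly_1_anti_invariant F"
    unfolding strongly_1_anti_invariant_def hyperplane_def by auto
qed

lemma bij_image_kernel_dotp_iff:
  fixes F :: "'n::finite vecfun"
  assumes "bij F"
  shows "F ` {x. dotp a x = 0} = {y. dotp v y = 0} \<longleftrightarrow> (\<forall>x. dotp v (F x) = dotp a x)"
proof -
  have "F ` {x. dotp a x = 0} = {y. dotp v y = 0} \<longleftrightarrow> {x. dotp a x = 0} = F -` {y. dotp v y = 0}"
    using assms by (metis bij_is_inj bij_is_surj inj_vimage_image_eq surj_image_vimage_eq)
  also have "\<dots> \<longleftrightarrow> (\<forall>x. dotp v (F x) = dotp a x)"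
    using bit_eqI by auto
  finally show ?thesis .
qed

lemma linear_component_iff_hyperplane_image:
  fixes F :: "'n::finite vecfun"
  assumes "bij F"
  shows "(\<exists>v a. v \<noteq> 0 \<and> (\<forall>x. dotp v (F x) = dotp a x)) \<longleftrightarrow>
    (\<exists>U W. hyperplane U \<and> hyperplane W \<and> F ` U = W)"
proof
  assume "\<exists>v a. v \<noteq> 0 \<and> (\<forall>x. dotp v (F x) = dotp a x)"
  then obtain v a where "v \<noteq> 0" and linear: "\<forall>x. dotp v (F x) = dotp a x"
    by blast
  have "a \<noteq> 0"
  proof
    assume "a = 0"
    then have "dotp v (F x) = 0" for x
      using linear by simp
    then have "dotp v y = 0" for y
      using bij_is_surj[OF assms] by (metis surjD)
    with \<open>v \<noteq> 0\<close> show False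
      by (metis dotp_not_identically_zero)
  qed
  moreover have "F ` {x. dotp a x = 0} = {y. dotp v y = 0}"
    using linear by (simp add: bij_image_kernel_dotp_iff[OF assms])
  ultimately show "\<exists>U W. hyperplane U \<and> hyperplane W \<and> F ` U = W"
    using \<open>v \<noteq> 0\<close> hyperplane_kernel_dotp by blast
next
  assume "\<exists>U W. hyperplane U \<and> hyperplane W \<and> F ` U = W"
  then obtain U W where "hyperplane U" "hyperplane W" and image: "F ` U = W"
    by blast
  then obtain a v where "v \<noteq> 0" "U = {x. dotp a x = 0}" "W = {y. dotp v y = 0}"
    by (metis hyperplane_eq_kernel_dotp)
  with image show "\<exists>v a. v \<noteq> 0 \<and> (\<forall>x. dotp v (F x) = dotp a x)"
    using bij_image_kernel_dotp_iff[OF assms] by blast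
qed

theorem proposition5p3:
  fixes \<gamma> :: "bit ^ 'n::finite \<Rightarrow> bit ^ 'n"
  assumes "CARD('n) > 1"
    and "bij \<gamma>"
    and "\<gamma> 0 = 0"
  shows "vnonlin \<gamma> \<noteq> 0 \<longleftrightarrow> strongly_1_anti_invariant \<gamma>"
proof -
  have "vnonlin \<gamma> = 0 \<longleftrightarrow> (\<exists>v a. v \<noteq> 0 \<and> (\<forall>x. dotp v (\<gamma> x) = dotp a x))"
    using assms(3) by (rule vnonlin_eq_0_iff)
  also have "\<dots> \<longleftrightarrow> (\<exists>U W. hyperplane U \<and> hyperplane W \<and> \<gamma> ` U = W)"
    using assms(2) by (rule linear_component_iff_hyperplane_image)
  also have "\<dots> \<longleftrightarrow> \<not> strongly_1_anti_invariant \<gamma>"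
    using not_strongly_1_anti_invariant_iff[OF bij_is_inj[OF assms(2)]] by blast
  finally show ?thesis
    by simp
qed

end
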